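(* Let $S$ be a semigroup and $a_1,a_2,\dotsc$ a bijective (injective) sequence in $S$ that has no proper sumsequence. Let $A_\infty:=\bigcap_{n=1}^{\infty}\mathrm{FS}(a_n,a_{n+1},\dotsc)$. Then: (1) for each $s\in A_\infty$ and each $n$, there is a nonempty finite index set $F$ with $\min F\ge n$ and $s=a_F$; (2) $A_\infty$ is a (nonempty) subsemigroup of $S$; (3) every sequence $b_1,b_2,\dotsc$ of elements of $A_\infty$ is a sumsequence of $a_1,a_2,\dotsc$.
   Context: Semigroups are written additively and are not assumed commutative. For a sequence $a_1,a_2,\dotsc$ and a finite nonempty index set $F=\{i_1<\dotsb<i_m\}\subseteq\mathbb N$, let $a_F:=a_{i_1}+\dotsb+a_{i_m}$; write $F_1<F_2$ if every element of $F_1$ is smaller than every element of $F_2$. A sumsequence of $a_1,a_2,\dotsc$ is a sequence $a_{F_1},a_{F_2},\dotsc$ for some sequence $F_1<F_2<\dotsb$ of nonempty finite index sets. A sequence is proper if $a_{F_1}\ne a_{F_2}$ for all nonempty finite $F_1<F_2$. $\mathrm{FS}(a_n,a_{n+1},\dotsc)$ is the set of all $a_F$ with $F$ nonempty finite and $\min F\ge n$. *)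

theory Defs
  imports Main
begin

fun lsum :: "'a::semigroup_add list \<Rightarrow> 'a" where
  "lsum [] = undefined"
| "lsum [x] = x"
| "lsum (x # y # xs) = x + lsum (y # xs)"

definition idxsum :: "(nat \<Rightarrow> 'a::semigroup_add) \<Rightarrow> nat set \<Rightarrow> 'a" where
  "idxsum a F = lsum (map a (sorted_list_of_set F))"

definition set_less :: "nat set \<Rightarrow> nat set \<Rightarrow> bool" where
  "set_less F G \<longleftrightarrow> (\<forall>x\<in>F. \<forall>y\<in>G. x < y)"

definition fin_ne :: "nat set \<Rightarrow> bool" where
  "fin_ne F \<longleftrightarrow> finite F \<and> F \<noteq> {}"

definition is_sumseq :: "(nat \<Rightarrow> 'a::semigroup_add) \<Rightarrow> (nat \<Rightarrow> 'a) \<Rightarrow> bool" where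
  "is_sumseq a b \<longleftrightarrow> (\<exists>F :: nat \<Rightarrow> nat set.
      (\<forall>i. fin_ne (F i)) \<and> (\<forall>i. set_less (F i) (F (Suc i))) \<and> (\<forall>i. b i = idxsum a (F i)))"

definition proper :: "(nat \<Rightarrow> 'a::semigroup_add) \<Rightarrow> bool" where
  "proper a \<longleftrightarrow> (\<forall>F1 F2. fin_ne F1 \<and> fin_ne F2 \<and> set_less F1 F2 \<longrightarrow> idxsum a F1 \<noteq> idxsum a F2)"

definition FS :: "(nat \<Rightarrow> 'a::semigroup_add) \<Rightarrow> nat \<Rightarrow> 'a set" where
  "FS a n = {idxsum a F | F. fin_ne F \<and> n \<le> Min F}"

end

theory Submission
  imports Defs
begin

text \<open>An element of the intersection of all \<open>FS a n\<close> has representations \<open>a_F\<close> with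
  \<open>min F\<close> arbitrarily large, so representations can be concatenated (closure under \<open>+\<close>) and
  chained into a sumsequence. For nonemptiness, if the intersection were empty then every finite
  set of values would eventually leave \<open>FS a n\<close>; hence one can choose indices
  \<open>m 0 < m 1 < \<dots>\<close> such that no sum of terms with indices \<open>\<le> m k\<close> is a sum of terms with
  indices \<open>\<ge> m (k + 1)\<close>, which makes the subsequence \<open>a \<circ> m\<close> a proper sumsequence.\<close>

lemma lsum_append: "xs \<noteq> [] \<Longrightarrow> ys \<noteq> [] \<Longrightarrow> lsum (xs @ ys) = lsum xs + lsum ys"
proof (induction xs rule: lsum.induct)
  case 1 then show ?case by simp
next
  case (2 x) then show ?case by (cases ys) auto
next
  case (3 x y xs) then show ?case by (simp add: add.assoc)
qed

lemma set_lessI: "fin_ne F \<Longrightarrow> fin_ne G \<Longrightarrow> Max F < Min G \<Longrightarrow> set_less F G"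
  unfolding set_less_def fin_ne_def
  by (meson Max_ge Min_le le_less_trans less_le_trans)

lemma sorted_list_of_set_Un_if_set_less:
  assumes "finite F" "finite G" "set_less F G"
  shows "sorted_list_of_set (F \<union> G) = sorted_list_of_set F @ sorted_list_of_set G"
proof -
  have "F \<inter> G = {}" using assms(3) by (auto simp: set_less_def)
  with assms show ?thesis
    by (subst sorted_list_of_set_unique[symmetric])
       (auto simp: sorted_wrt_append set_less_def card_Un_disjoint)
qed

lemma sorted_list_of_set_image_strict_mono:
  assumes "strict_mono m" "finite G"
  shows "sorted_list_of_set (m ` G) = map m (sorted_list_of_set G)"
proof -
  have "inj m" using assms(1) strict_mono_imp_inj_on by blast
  moreover have "sorted_wrt (<) (map m (sorted_list_of_set G))"
    using assms by (auto simp: sorted_wrt_map strict_mono_less)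
  ultimately show ?thesis using assms
    by (subst sorted_list_of_set_unique[symmetric]) (auto simp: card_image inj_on_subset)
qed

lemma idxsum_singleton [simp]: "idxsum a {i} = a i"
  by (simp add: idxsum_def)

lemma idxsum_Un:
  "fin_ne F \<Longrightarrow> fin_ne G \<Longrightarrow> set_less F G \<Longrightarrow> idxsum a (F \<union> G) = idxsum a F + idxsum a G"
  unfolding idxsum_def fin_ne_def by (simp add: sorted_list_of_set_Un_if_set_less lsum_append)

lemma idxsum_comp_strict_mono:
  "strict_mono m \<Longrightarrow> finite G \<Longrightarrow> idxsum (a \<circ> m) G = idxsum a (m ` G)"
  by (simp add: idxsum_def sorted_list_of_set_image_strict_mono)

lemma FS_antimono: "m \<le> n \<Longrightarrow> FS a n \<subseteq> FS a m"
  unfolding FS_def by auto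

lemma Inter_FS_add_closed:
  assumes x: "x \<in> (\<Inter>n. FS a n)" and y: "y \<in> (\<Inter>n. FS a n)"
  shows "x + y \<in> (\<Inter>n. FS a n)"
proof
  fix n
  obtain F where F: "fin_ne F" "n \<le> Min F" "x = idxsum a F"
    using x by (auto simp: FS_def)
  obtain G where G: "fin_ne G" "Suc (Max F) \<le> Min G" "y = idxsum a G"
    using y by (auto simp: FS_def)
  have "set_less F G" using F G by (intro set_lessI) auto
  then have "x + y = idxsum a (F \<union> G)" using F G by (simp add: idxsum_Un)
  moreover have "fin_ne (F \<union> G)" using F(1) G(1) by (auto simp: fin_ne_def)
  moreover have "n \<le> Min (F \<union> G)"
    using F G \<open>set_less F G\<close> by (auto simp: fin_ne_def Min_Un set_less_def)
  ultimately show "x + y \<in> FS a n" unfolding FS_def by blast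
qed

lemma is_sumseq_if_range_subset_Inter_FS:
  assumes "range b \<subseteq> (\<Inter>n. FS a n)"
  shows "is_sumseq a b"
proof -
  define pick where "pick i n = (SOME F. fin_ne F \<and> n \<le> Min F \<and> b i = idxsum a F)" for i n
  have pick: "fin_ne (pick i n) \<and> n \<le> Min (pick i n) \<and> b i = idxsum a (pick i n)" for i n
    unfolding pick_def by (rule someI_ex) (use assms in \<open>auto simp: FS_def\<close>)
  define F where "F = rec_nat (pick 0 0) (\<lambda>i Fi. pick (Suc i) (Suc (Max Fi)))"
  have F_0: "F 0 = pick 0 0" and F_Suc: "F (Suc i) = pick (Suc i) (Suc (Max (F i)))" for i
    by (simp_all add: F_def)
  have F: "fin_ne (F i) \<and> b i = idxsum a (F i)" for i
    by (cases i) (use pick F_0 F_Suc in presburger)+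
  moreover have "set_less (F i) (F (Suc i))" for i
  proof (rule set_lessI)
    show "Max (F i) < Min (F (Suc i))"
      using pick[of "Suc i" "Suc (Max (F i))"] F_Suc[of i] by simp
  qed (use F in blast)+
  ultimately show ?thesis unfolding is_sumseq_def by blast
qed

lemma is_sumseq_comp_strict_mono: "strict_mono m \<Longrightarrow> is_sumseq a (a \<circ> m)"
  unfolding is_sumseq_def
  by (rule exI[of _ "\<lambda>i. {m i}"]) (auto simp: fin_ne_def set_less_def strict_mono_less)

lemma proper_comp_if_sums_escape:
  assumes m: "strict_mono m"
    and escape: "\<And>k G. fin_ne G \<Longrightarrow> Max G \<le> k \<Longrightarrow> idxsum a (m ` G) \<notin> FS a (m (Suc k))"
  shows "proper (a \<circ> m)"
  unfolding proper_def
proof (intro allI impI)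
  fix G1 G2 assume G: "fin_ne G1 \<and> fin_ne G2 \<and> set_less G1 G2"
  let ?k = "Max G1"
  have "Suc ?k \<le> j" if "j \<in> G2" for j
    using G that Max_in[of G1] by (auto simp: fin_ne_def set_less_def Suc_le_eq)
  then have "m (Suc ?k) \<le> Min (m ` G2)"
    using G m by (auto simp: fin_ne_def strict_mono_less_eq)
  moreover have "fin_ne (m ` G2)" using G by (auto simp: fin_ne_def)
  ultimately have "idxsum a (m ` G2) \<in> FS a (m (Suc ?k))" unfolding FS_def by blast
  moreover have "idxsum a (m ` G1) \<notin> FS a (m (Suc ?k))" using G by (intro escape) auto
  ultimately show "idxsum (a \<circ> m) G1 \<noteq> idxsum (a \<circ> m) G2"
    using G m by (auto simp: idxsum_comp_strict_mono fin_ne_def)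
qed

lemma finite_disjoint_FS_if_Inter_empty:
  assumes "(\<Inter>n. FS a n) = {}" "finite X"
  shows "\<exists>n. X \<inter> FS a n = {}"
proof -
  have "\<forall>x\<in>X. \<exists>n. x \<notin> FS a n" using assms(1) by auto
  then obtain N where N: "\<And>x. x \<in> X \<Longrightarrow> x \<notin> FS a (N x)" by metis
  have "x \<notin> FS a (Max (N ` X))" if "x \<in> X" for x
    using N[OF that] FS_antimono[of "N x" "Max (N ` X)" a] assms(2) that by auto
  then show ?thesis by blast
qed

lemma Inter_FS_nonempty:
  assumes "\<not> (\<exists>b. is_sumseq a b \<and> proper b)"
  shows "(\<Inter>n. FS a n) \<noteq> {}"
proof
  assume empty: "(\<Inter>n. FS a n) = {}"
  have "\<forall>j. \<exists>n. idxsum a ` (Pow {..j} - {{}}) \<inter> FS a n = {}"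
    by (intro allI finite_disjoint_FS_if_Inter_empty[OF empty]) simp
  then obtain N where N: "\<And>j. idxsum a ` (Pow {..j} - {{}}) \<inter> FS a (N j) = {}"
    by (metis choice)
  define m where "m k = ((\<lambda>j. Suc j + N j) ^^ k) 0" for k
  have m_Suc: "m (Suc k) = Suc (m k) + N (m k)" for k
    by (simp add: m_def)
  have m: "strict_mono m"
    unfolding strict_mono_Suc_iff m_Suc by simp
  have "idxsum a (m ` G) \<notin> FS a (m (Suc k))" if G: "fin_ne G" "Max G \<le> k" for k G
  proof -
    have "m ` G \<in> Pow {..m k} - {{}}"
      using G m by (auto simp: fin_ne_def strict_mono_less_eq)
    then have "idxsum a (m ` G) \<notin> FS a (N (m k))" using N by blast
    then show ?thesis using FS_antimono[of "N (m k)" "m (Suc k)" a] m_Suc by auto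
  qed
  then have "proper (a \<circ> m)" by (rule proper_comp_if_sums_escape[OF m])
  with assms is_sumseq_comp_strict_mono[OF m] show False by blast
qed

theorem lemma2p4:
  fixes a :: "nat \<Rightarrow> 'a::semigroup_add"
  assumes "inj a"
    and "\<not> (\<exists>b. is_sumseq a b \<and> proper b)"
  defines "A_inf \<equiv> (\<Inter>n. FS a n)"
  shows "(\<forall>s\<in>A_inf. \<forall>n. \<exists>F. fin_ne F \<and> n \<le> Min F \<and> s = idxsum a F)
    \<and> (A_inf \<noteq> {} \<and> (\<forall>x\<in>A_inf. \<forall>y\<in>A_inf. x + y \<in> A_inf))
    \<and> (\<forall>b. range b \<subseteq> A_inf \<longrightarrow> is_sumseq a b)"
proof (intro conjI)
  show "\<forall>s\<in>A_inf. \<forall>n. \<exists>F. fin_ne F \<and> n \<le> Min F \<and> s = idxsum a F"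
    unfolding A_inf_def FS_def by blast
  show "A_inf \<noteq> {}"
    unfolding A_inf_def by (rule Inter_FS_nonempty[OF assms(2)])
  show "\<forall>x\<in>A_inf. \<forall>y\<in>A_inf. x + y \<in> A_inf"
    unfolding A_inf_def by (intro ballI Inter_FS_add_closed)
  show "\<forall>b. range b \<subseteq> A_inf \<longrightarrow> is_sumseq a b"
    unfolding A_inf_def using is_sumseq_if_range_subset_Inter_FS by blast
qed

end
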